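(* For every $n\ge1$, the sum of the coefficients of the degree-one monomials $X_0,X_1,\dots,X_{n-1}$ in the polynomial $\widehat C_n$ equals $(-1)^{n-1}$.
   Context: Polynomials $S_i(n)$: let $a_0,a_1,\dots$ be indeterminates, $a(x)=\sum_{i\ge0}a_ix^i$; for a positive integer $j$ set $G(x)=\prod_{i=0}^{j-1}\frac{1+a(x)x^2}{1+ix}$, $H(x)=\prod_{i=1-j}^{-1}\frac{1+ix}{1+a(x)x^2}$, $u=2j-1$, $v=j(j-1)$. For each $n\ge1$ there are unique $S_0(n),\dots,S_n(n)\in\mathbb{Q}[a_0,\dots,a_{n-2}]$, independent of $j$, with: for every positive integer $j$ the coefficient of $x^{n-1}$ in $\frac{G(x)-H(x)}{x^2}(1+a(x)x^2)$ equals $u(a_{n-1}+S_0(n)+\sum_{i=1}^nS_i(n)v^i)$. Write $S_i(n)(c_1,\dots,c_{n-1})$ for the substitution $a_k=c_{k+1}$. Recursion: $X_0,X_1,\dots$ are indeterminates, $D$ is the $\mathbb{Q}$-linear derivation of $\mathbb{Q}[X_0,X_1,\dots]$ with $D(X_k)=X_{k+1}$, $P_1=X_0$, $P_{m+1}=D(P_m)-3X_0P_m$, and for $m\ge1$ \[\widehat C_m=-S_0(m)(\widehat C_1,\dots,\widehat C_{m-1})+\sum_{i=1}^m3\cdot2^iS_i(m)(\widehat C_1,\dots,\widehat C_{m-1})P_i.\] *)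

theory Defs
  imports "HOL-Library.Poly_Mapping" "HOL-Computational_Algebra.Formal_Power_Series"
begin

(* The same ring is used for Q[a_0,a_1,...]
  and for Q[X_0,X_1,...]. *)

type_synonym mpoly = "(nat \<Rightarrow>\<^sub>0 nat) \<Rightarrow>\<^sub>0 rat"

definition mconst :: "rat \<Rightarrow> mpoly" where
  "mconst c = Poly_Mapping.single 0 c"

definition mvar :: "nat \<Rightarrow> mpoly" where
  "mvar k = Poly_Mapping.single (Poly_Mapping.single k 1) 1"

definition mcoeff :: "mpoly \<Rightarrow> (nat \<Rightarrow>\<^sub>0 nat) \<Rightarrow> rat" where
  "mcoeff p m = Poly_Mapping.lookup p m"

definition vars_in :: "mpoly \<Rightarrow> nat set \<Rightarrow> bool" where
  "vars_in p V \<longleftrightarrow> (\<forall>m\<in>Poly_Mapping.keys p. Poly_Mapping.keys m \<subseteq> V)"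

definition msubst :: "(nat \<Rightarrow> mpoly) \<Rightarrow> mpoly \<Rightarrow> mpoly" where
  "msubst \<sigma> p = (\<Sum>m\<in>Poly_Mapping.keys p. mconst (Poly_Mapping.lookup p m) * (\<Prod>k\<in>Poly_Mapping.keys m. \<sigma> k ^ Poly_Mapping.lookup m k))"

(* The Q-linear derivation D with D(X_k) = X_(k+1), given on each monomial by the
  Leibniz rule. *)
definition mD :: "mpoly \<Rightarrow> mpoly" where
  "mD p = (\<Sum>m\<in>Poly_Mapping.keys p. mconst (Poly_Mapping.lookup p m) *
      (\<Sum>k\<in>Poly_Mapping.keys m. of_nat (Poly_Mapping.lookup m k) * mvar (Suc k) * mvar k ^ (Poly_Mapping.lookup m k - 1)
          * (\<Prod>l\<in>Poly_Mapping.keys m - {k}. mvar l ^ Poly_Mapping.lookup m l)))"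

(* Inverse of a power series (used only for series with constant term 1,
  where it exists and is unique). *)
definition fps_inv1 :: "mpoly fps \<Rightarrow> mpoly fps" where
  "fps_inv1 f = (THE g. f * g = 1)"

definition aser :: "mpoly fps" where
  "aser = Abs_fps mvar"

definition Gser :: "nat \<Rightarrow> mpoly fps" where
  "Gser j = (\<Prod>i\<in>{0..<j}. (1 + aser * fps_X ^ 2) * fps_inv1 (1 + of_nat i * fps_X))"

definition Hser :: "nat \<Rightarrow> mpoly fps" where
  "Hser j = (\<Prod>i\<in>{1 - int j..-1}. (1 + of_int i * fps_X) * fps_inv1 (1 + aser * fps_X ^ 2))"

(* coefficient of x^(n-1) in ((G - H)/x^2) (1 + a(x) x^2); division by x^2 is the
  shift by two (G - H has vanishing coefficients of 1 and x) *)
definition lhs_coeff :: "nat \<Rightarrow> nat \<Rightarrow> mpoly" where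
  "lhs_coeff j n = fps_nth (fps_shift 2 (Gser j - Hser j) * (1 + aser * fps_X ^ 2)) (n - 1)"

definition S_prop :: "nat \<Rightarrow> (nat \<Rightarrow> mpoly) \<Rightarrow> bool" where
  "S_prop n S \<longleftrightarrow>
     (\<forall>i\<le>n. vars_in (S i) {..<n - 1}) \<and> (\<forall>i>n. S i = 0) \<and>
     (\<forall>j::nat. j \<ge> 1 \<longrightarrow>
        lhs_coeff j n = of_nat (2 * j - 1) *
          (mvar (n - 1) + S 0 + (\<Sum>i=1..n. S i * of_nat (j * (j - 1)) ^ i)))"

(* S n i = S_i(n) *)
definition S :: "nat \<Rightarrow> nat \<Rightarrow> mpoly" where
  "S n = (THE T. S_prop n T)"

(* P_m, m >= 1 (P 0 is an unused dummy) *)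
fun P :: "nat \<Rightarrow> mpoly" where
  "P 0 = 0"
| "P (Suc 0) = mvar 0"
| "P (Suc (Suc m)) = mD (P (Suc m)) - 3 * mvar 0 * P (Suc m)"

(* Given cs = [C_1,...,C_(m-1)], compute C_m, substituting a_k := C_(k+1). *)
definition Cstep :: "mpoly list \<Rightarrow> mpoly" where
  "Cstep cs = (let m = Suc (length cs);
                   \<sigma> = (\<lambda>k. if k < length cs then cs ! k else 0)
               in - msubst \<sigma> (S m 0) +
                  (\<Sum>i=1..m. 3 * 2 ^ i * msubst \<sigma> (S m i) * P i))"

primrec Clist :: "nat \<Rightarrow> mpoly list" where
  "Clist 0 = []"
| "Clist (Suc m) = Clist m @ [Cstep (Clist m)]"

definition Chat :: "nat \<Rightarrow> mpoly" where
  "Chat m = Clist m ! (m - 1)"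

end

theory Submission
  imports Defs "HOL-Computational_Algebra.Polynomial"
begin

(*
  Only constant and linear terms matter.  By induction on m, Chat m has no constant term; S_0(m)
  has neither constant nor linear terms (read off from the defining identity at j = 1, where
  v = 0); and P_i has no constant term and linear part X_(i-1).  Substituting the Chat k therefore
  leaves sum_i 3 2^i S_i(m)(0) X_(i-1) as the linear part of Chat m, and the claim becomes
  sum_i 3 2^i S_i(n)(0) = (-1)^(n-1): the constant term of the defining identity at j = 2, where
  u = 3 and v = 2.

  That constant term is the coefficient of x^(n+1) in G - H at a = 0, i.e.
  psi_(n+1)(2) - psi_(n+1)(-1), where psi_l(t) is the coefficient of x^l in prod_(i<t) 1/(1 + i x),
  a polynomial in t.  The functional equation (1 + t x) Psi_(t+1) = Psi_t gives psi_l(2) = (-1)^l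
  and psi_(l+1)(-1) = 0 for l > 0.

  Since the S_i(n) are given by a definite description, the bulk of the work is their existence.
  G and H are the values at t = j and t = 1 - j of one series Phi_t = (1 + a(x) x^2)^t Psi_t whose
  coefficients are polynomials in t, and p(j) - p(1 - j) is (2j - 1) times a polynomial in
  v = j(j - 1); a weight argument shows that a_(n-1) occurs only in the linear term.  Uniqueness
  holds because v takes infinitely many values.
*)

unbundle fps_syntax

section \<open>Constant and linear coefficients\<close>

lemma poly_mapping_sum_singles:
  "(p::'a \<Rightarrow>\<^sub>0 'b::comm_monoid_add) = (\<Sum>m\<in>Poly_Mapping.keys p. Poly_Mapping.single m (Poly_Mapping.lookup p m))"
  by (rule poly_mapping_eqI) (auto simp: lookup_sum lookup_single when_def in_keys_iff)

lemma lookup_mult_keys: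
  fixes p q :: "('v \<Rightarrow>\<^sub>0 nat) \<Rightarrow>\<^sub>0 'a::comm_semiring_1"
  shows "Poly_Mapping.lookup (p * q) m =
    (\<Sum>a\<in>Poly_Mapping.keys p. \<Sum>b\<in>Poly_Mapping.keys q.
       if a + b = m then Poly_Mapping.lookup p a * Poly_Mapping.lookup q b else 0)"
proof -
  have "p * q = (\<Sum>a\<in>Poly_Mapping.keys p. \<Sum>b\<in>Poly_Mapping.keys q.
      Poly_Mapping.single (a + b) (Poly_Mapping.lookup p a * Poly_Mapping.lookup q b))"
    by (subst poly_mapping_sum_singles[of p], subst poly_mapping_sum_singles[of q])
       (simp add: sum_product mult_single)
  then show ?thesis
    by (simp add: lookup_sum lookup_single when_def)
qed

lemma monom_add_eq_0_iff: "(a::'v \<Rightarrow>\<^sub>0 nat) + b = 0 \<longleftrightarrow> a = 0 \<and> b = 0"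
  by (auto simp: poly_mapping_eq_iff lookup_add fun_eq_iff)

lemma single_Suc_0_neq_0 [simp]: "Poly_Mapping.single k (Suc 0) \<noteq> 0"
  by (metis lookup_single_eq lookup_zero nat.distinct(1))

lemma monom_add_eq_single_iff:
  "(a::'v \<Rightarrow>\<^sub>0 nat) + b = Poly_Mapping.single k 1 \<longleftrightarrow>
     (a = 0 \<and> b = Poly_Mapping.single k 1) \<or> (a = Poly_Mapping.single k 1 \<and> b = 0)"
proof
  assume h: "a + b = Poly_Mapping.single k 1"
  have sum: "Poly_Mapping.lookup a i + Poly_Mapping.lookup b i = (if i = k then 1 else 0)" for i
    using h by (metis lookup_add lookup_single_eq lookup_single_not_eq)
  have off: "Poly_Mapping.lookup a i = 0 \<and> Poly_Mapping.lookup b i = 0" if "i \<noteq> k" for i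
    using sum[of i] that by (metis add_is_0)
  have "Poly_Mapping.lookup a k + Poly_Mapping.lookup b k = 1"
    using sum[of k] by simp
  then have "Poly_Mapping.lookup a k = 0 \<and> Poly_Mapping.lookup b k = 1 \<or>
             Poly_Mapping.lookup a k = 1 \<and> Poly_Mapping.lookup b k = 0"
    by linarith
  then show "(a = 0 \<and> b = Poly_Mapping.single k 1) \<or> (a = Poly_Mapping.single k 1 \<and> b = 0)"
  proof
    assume "Poly_Mapping.lookup a k = 0 \<and> Poly_Mapping.lookup b k = 1"
    then have "a = 0 \<and> b = Poly_Mapping.single k 1"
      using off by (auto simp: poly_mapping_eq_iff fun_eq_iff lookup_single when_def) (metis)
    then show ?thesis by blast
  next
    assume "Poly_Mapping.lookup a k = 1 \<and> Poly_Mapping.lookup b k = 0"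
    then have "b = 0 \<and> a = Poly_Mapping.single k 1"
      using off by (auto simp: poly_mapping_eq_iff fun_eq_iff lookup_single when_def) (metis)
    then show ?thesis by blast
  qed
qed auto

lemma single_one_eq_iff_keys:
  "(m::'v \<Rightarrow>\<^sub>0 nat) = Poly_Mapping.single k 1 \<longleftrightarrow> Poly_Mapping.keys m = {k} \<and> Poly_Mapping.lookup m k = 1"
proof
  assume h: "Poly_Mapping.keys m = {k} \<and> Poly_Mapping.lookup m k = 1"
  show "m = Poly_Mapping.single k 1"
  proof (rule poly_mapping_eqI)
    fix i show "Poly_Mapping.lookup m i = Poly_Mapping.lookup (Poly_Mapping.single k 1) i"
    proof (cases "i = k")
      case False
      then have "i \<notin> Poly_Mapping.keys m" using h by simp
      then show ?thesis using False by (simp add: in_keys_iff lookup_single_not_eq)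
    qed (simp add: h)
  qed
qed simp

definition const_coeff :: "(('v \<Rightarrow>\<^sub>0 nat) \<Rightarrow>\<^sub>0 'a::zero) \<Rightarrow> 'a" where
  "const_coeff p = Poly_Mapping.lookup p 0"

definition lin_coeff :: "'v \<Rightarrow> (('v \<Rightarrow>\<^sub>0 nat) \<Rightarrow>\<^sub>0 'a::zero) \<Rightarrow> 'a" where
  "lin_coeff k p = Poly_Mapping.lookup p (Poly_Mapping.single k 1)"

lemma const_coeff_0 [simp]: "const_coeff 0 = 0"
  and const_coeff_1 [simp]: "const_coeff (1 :: ('v \<Rightarrow>\<^sub>0 nat) \<Rightarrow>\<^sub>0 'a::comm_ring_1) = 1"
  and lin_coeff_0 [simp]: "lin_coeff k 0 = 0"
  and lin_coeff_1 [simp]: "lin_coeff k (1 :: ('v \<Rightarrow>\<^sub>0 nat) \<Rightarrow>\<^sub>0 'a::comm_ring_1) = 0"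
  by (simp_all add: const_coeff_def lin_coeff_def lookup_one)

context
  fixes p q :: "('v \<Rightarrow>\<^sub>0 nat) \<Rightarrow>\<^sub>0 'a::comm_ring_1"
begin

lemma const_coeff_mult: "const_coeff (p * q) = const_coeff p * const_coeff q"
proof -
  have "const_coeff (p * q) = (\<Sum>a\<in>Poly_Mapping.keys p. if a = 0 then
      (\<Sum>b\<in>Poly_Mapping.keys q. if b = 0 then Poly_Mapping.lookup p a * Poly_Mapping.lookup q b else 0)
      else 0)"
    unfolding const_coeff_def lookup_mult_keys
    apply (intro sum.cong refl)
    subgoal for a by (cases "a = 0") (auto simp: monom_add_eq_0_iff)
    done
  then show ?thesis
    by (simp add: sum.delta const_coeff_def in_keys_iff)
qed

lemma lin_coeff_mult: "lin_coeff k (p * q) = const_coeff p * lin_coeff k q + lin_coeff k p * const_coeff q"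
proof -
  let ?e = "Poly_Mapping.single k (1::nat)"
  have "lin_coeff k (p * q) = (\<Sum>a\<in>Poly_Mapping.keys p.
      (if a = 0 then (\<Sum>b\<in>Poly_Mapping.keys q. if b = ?e then Poly_Mapping.lookup p a * Poly_Mapping.lookup q b else 0) else 0)
    + (if a = ?e then (\<Sum>b\<in>Poly_Mapping.keys q. if b = 0 then Poly_Mapping.lookup p a * Poly_Mapping.lookup q b else 0) else 0))"
    unfolding lin_coeff_def lookup_mult_keys
    apply (intro sum.cong refl)
    subgoal for a by (cases "a = 0"; cases "a = ?e") (auto simp: monom_add_eq_single_iff monom_add_eq_single_iff[simplified])
    done
  then show ?thesis
    by (simp add: sum.distrib sum.delta const_coeff_def lin_coeff_def in_keys_iff)
qed

lemma const_coeff_add [simp]: "const_coeff (p + q) = const_coeff p + const_coeff q"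
  and const_coeff_diff [simp]: "const_coeff (p - q) = const_coeff p - const_coeff q"
  and lin_coeff_add [simp]: "lin_coeff k (p + q) = lin_coeff k p + lin_coeff k q"
  and lin_coeff_diff [simp]: "lin_coeff k (p - q) = lin_coeff k p - lin_coeff k q"
  and lin_coeff_uminus [simp]: "lin_coeff k (- p) = - lin_coeff k p"
  by (simp_all add: const_coeff_def lin_coeff_def lookup_add lookup_minus)

end

context
  fixes f :: "'i \<Rightarrow> ('v \<Rightarrow>\<^sub>0 nat) \<Rightarrow>\<^sub>0 'a::comm_ring_1"
begin

lemma const_coeff_sum: "const_coeff (sum f A) = (\<Sum>x\<in>A. const_coeff (f x))"
  and lin_coeff_sum: "lin_coeff k (sum f A) = (\<Sum>x\<in>A. lin_coeff k (f x))"
  by (simp_all add: const_coeff_def lin_coeff_def lookup_sum)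

lemma const_coeff_prod: "const_coeff (prod f A) = (\<Prod>x\<in>A. const_coeff (f x))"
  by (induction A rule: infinite_finite_induct) (simp_all add: const_coeff_mult)

end

lemma const_coeff_power: "const_coeff (p ^ e) = const_coeff p ^ e"
  for p :: "('v \<Rightarrow>\<^sub>0 nat) \<Rightarrow>\<^sub>0 'a::comm_ring_1"
  by (induction e) (simp_all add: const_coeff_mult)

lemma const_coeff_of_nat [simp]: "const_coeff (of_nat c :: ('v \<Rightarrow>\<^sub>0 nat) \<Rightarrow>\<^sub>0 'a::comm_ring_1) = of_nat c"
  and const_coeff_numeral [simp]: "const_coeff (numeral w :: ('v \<Rightarrow>\<^sub>0 nat) \<Rightarrow>\<^sub>0 'a::comm_ring_1) = numeral w"
  by (simp_all add: const_coeff_def lin_coeff_def lookup_of_nat lookup_numeral when_def)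

definition order_ge2 :: "(('v \<Rightarrow>\<^sub>0 nat) \<Rightarrow>\<^sub>0 'a::zero) \<Rightarrow> bool" where
  "order_ge2 p \<longleftrightarrow> const_coeff p = 0 \<and> (\<forall>k. lin_coeff k p = 0)"

context
  fixes p q :: "('v \<Rightarrow>\<^sub>0 nat) \<Rightarrow>\<^sub>0 'a::comm_ring_1"
begin

lemma order_ge2_mult_const_coeff: "const_coeff p = 0 \<Longrightarrow> const_coeff q = 0 \<Longrightarrow> order_ge2 (p * q)"
  and order_ge2_mult_right: "order_ge2 q \<Longrightarrow> order_ge2 (p * q)"
  by (simp_all add: order_ge2_def const_coeff_mult lin_coeff_mult)

end

lemma order_ge2_power: "const_coeff p = 0 \<Longrightarrow> 2 \<le> e \<Longrightarrow> order_ge2 (p ^ e)"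
  for p :: "('v \<Rightarrow>\<^sub>0 nat) \<Rightarrow>\<^sub>0 'a::comm_ring_1"
proof (induction e)
  case (Suc e)
  show ?case
  proof (cases "2 \<le> e")
    case True then show ?thesis using Suc by (simp add: order_ge2_mult_right)
  next
    case False
    then have "e = 1" using Suc by simp
    then show ?thesis using Suc by (simp add: order_ge2_mult_const_coeff)
  qed
qed simp

lemma order_ge2_sum:
  "(\<And>x. x \<in> A \<Longrightarrow> order_ge2 (f x)) \<Longrightarrow> order_ge2 (sum f A)"
  for f :: "'i \<Rightarrow> ('v \<Rightarrow>\<^sub>0 nat) \<Rightarrow>\<^sub>0 'a::comm_ring_1"
  by (simp add: order_ge2_def const_coeff_sum lin_coeff_sum)

lemma order_ge2_prod:
  fixes f :: "'i \<Rightarrow> ('v \<Rightarrow>\<^sub>0 nat) \<Rightarrow>\<^sub>0 'a::comm_ring_1"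
  assumes "finite A" "\<And>x. x \<in> A \<Longrightarrow> const_coeff (f x) = 0" "2 \<le> card A"
  shows "order_ge2 (prod f A)"
  using assms
proof (induction A rule: finite_induct)
  case (insert x F)
  show ?case
  proof (cases "2 \<le> card F")
    case True then show ?thesis using insert by (simp add: order_ge2_mult_right)
  next
    case False
    then have "card F = 1" using insert by simp
    then obtain y where "F = {y}" by (auto simp: card_Suc_eq)
    then show ?thesis using insert by (simp add: order_ge2_mult_const_coeff)
  qed
qed simp

section \<open>Substitution and the derivation D\<close>

lemma mconst_add: "mconst (a + b) = mconst a + mconst b"
  and mconst_diff: "mconst (a - b) = mconst a - mconst b"
  and mconst_mult: "mconst (a * b) = mconst a * mconst b"
  and mconst_0 [simp]: "mconst 0 = 0"
  and mconst_1 [simp]: "mconst 1 = 1"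
  and mconst_of_nat: "mconst (of_nat k) = of_nat k"
  and mconst_of_int: "mconst (of_int i) = of_int i"
  by (simp_all add: mconst_def single_add single_diff mult_single)

lemma mconst_power: "mconst (a ^ k) = mconst a ^ k"
  by (induction k) (simp_all add: mconst_mult)

lemma mconst_sum: "mconst (sum f A) = (\<Sum>x\<in>A. mconst (f x))"
  by (induction A rule: infinite_finite_induct) (simp_all add: mconst_add)

lemma lookup_mconst_mult: "Poly_Mapping.lookup (mconst c * p) m = c * Poly_Mapping.lookup p m"
  by (simp add: mconst_def mult_map_scale_conv_mult[symmetric] map.rep_eq when_def)

lemma lookup_mult_mconst_power: "Poly_Mapping.lookup (p * mconst w ^ l) m = Poly_Mapping.lookup p m * w ^ l"
  by (simp add: mconst_power[symmetric] mult.commute[of p] lookup_mconst_mult)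

lemma lookup_mvar: "Poly_Mapping.lookup (mvar k) m = (if m = Poly_Mapping.single k 1 then 1 else 0)"
  by (auto simp: mvar_def lookup_single when_def)

lemma lin_coeff_mvar [simp]: "lin_coeff q (mvar k) = (if q = k then 1 else 0)"
  by (simp add: lin_coeff_def mvar_def lookup_single when_def)
     (metis lookup_single_eq lookup_single_not_eq Zero_not_Suc)

lemma const_coeff_mconst [simp]: "const_coeff (mconst c) = c"
  and lin_coeff_mconst [simp]: "lin_coeff k (mconst c) = 0"
  and const_coeff_mvar [simp]: "const_coeff (mvar k) = 0"
  and const_coeff_mconst_mult [simp]: "const_coeff (mconst c * p) = c * const_coeff p"
  and lin_coeff_mconst_mult [simp]: "lin_coeff k (mconst c * p) = c * lin_coeff k p"
  by (auto simp: const_coeff_def lin_coeff_def mconst_def lookup_mvar lookup_single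
      lookup_mconst_mult[unfolded mconst_def])

lemma const_coeff_msubst:
  assumes "\<And>k. const_coeff (\<sigma> k) = 0"
  shows "const_coeff (msubst \<sigma> p) = const_coeff p"
proof -
  have monom: "const_coeff (\<Prod>k\<in>Poly_Mapping.keys m. \<sigma> k ^ Poly_Mapping.lookup m k) = (if m = 0 then 1 else 0)"
    for m :: "nat \<Rightarrow>\<^sub>0 nat"
  proof -
    have "const_coeff (\<Prod>k\<in>Poly_Mapping.keys m. \<sigma> k ^ Poly_Mapping.lookup m k) =
        (\<Prod>k\<in>Poly_Mapping.keys m. (0::rat))"
      by (intro trans[OF const_coeff_prod] prod.cong refl) (simp add: const_coeff_power assms in_keys_iff)
    then show ?thesis by (simp add: card_gt_0_iff)
  qed
  have "const_coeff (msubst \<sigma> p) = (\<Sum>m\<in>Poly_Mapping.keys p. Poly_Mapping.lookup p m * (if m = 0 then 1 else 0))"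
    unfolding msubst_def const_coeff_sum by (simp add: monom)
  also have "\<dots> = const_coeff p"
    by (simp add: sum.delta const_coeff_def in_keys_iff if_distrib cong: if_cong)
  finally show ?thesis .
qed

lemma order_ge2_msubst:
  assumes "\<And>k. const_coeff (\<sigma> k) = 0" and "order_ge2 p"
  shows "order_ge2 (msubst \<sigma> p)"
  unfolding msubst_def
proof (intro order_ge2_sum)
  fix m assume m: "m \<in> Poly_Mapping.keys p"
  have "m \<noteq> 0" using m assms(2) by (auto simp: order_ge2_def const_coeff_def in_keys_iff)
  have not_linear: "m \<noteq> Poly_Mapping.single k 1" for k
    using m assms(2) by (auto simp: order_ge2_def lin_coeff_def in_keys_iff)
  have factors: "const_coeff (\<sigma> k ^ Poly_Mapping.lookup m k) = 0" if "k \<in> Poly_Mapping.keys m" for k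
    using that by (simp add: const_coeff_power assms in_keys_iff)
  have "order_ge2 (\<Prod>k\<in>Poly_Mapping.keys m. \<sigma> k ^ Poly_Mapping.lookup m k)"
  proof (cases "2 \<le> card (Poly_Mapping.keys m)")
    case True
    then show ?thesis by (intro order_ge2_prod) (auto simp: factors)
  next
    case False
    have "Poly_Mapping.keys m \<noteq> {}" using \<open>m \<noteq> 0\<close> by simp
    then have "card (Poly_Mapping.keys m) = 1" using False
      by (metis One_nat_def card_0_eq finite_keys less_2_cases not_le)
    then obtain k where k: "Poly_Mapping.keys m = {k}" by (auto simp: card_Suc_eq)
    then have "Poly_Mapping.lookup m k \<noteq> 1" using not_linear[of k] single_one_eq_iff_keys[of m k] by blast
    moreover have "Poly_Mapping.lookup m k \<noteq> 0" using k by (metis in_keys_iff singletonI)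
    ultimately show ?thesis using k by (simp add: order_ge2_power assms)
  qed
  then show "order_ge2 (mconst (Poly_Mapping.lookup p m) * (\<Prod>k\<in>Poly_Mapping.keys m. \<sigma> k ^ Poly_Mapping.lookup m k))"
    by (simp add: order_ge2_def)
qed

lemma const_coeff_mD: "const_coeff (mD p) = 0"
  by (simp add: mD_def const_coeff_sum const_coeff_mult)

text \<open>In the Leibniz expansion of \<open>mD\<close> every term of a monomial of degree at least 2 still
  has degree at least 2, so only the linear monomials of \<open>p\<close> contribute to the linear part.\<close>

lemma lin_coeff_mD_term:
  assumes k: "k \<in> Poly_Mapping.keys m"
  shows "lin_coeff q (of_nat (Poly_Mapping.lookup m k) * mvar (Suc k) * mvar k ^ (Poly_Mapping.lookup m k - 1)
          * (\<Prod>l\<in>Poly_Mapping.keys m - {k}. mvar l ^ Poly_Mapping.lookup m l))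
    = (if q = Suc k \<and> m = Poly_Mapping.single k 1 then 1 else 0)"
proof -
  have "(\<Prod>l\<in>Poly_Mapping.keys m - {k}. (0::rat) ^ Poly_Mapping.lookup m l) =
      (if Poly_Mapping.keys m - {k} = {} then 1 else 0)"
  proof (cases "Poly_Mapping.keys m - {k} = {}")
    case True then show ?thesis by (simp only: True prod.empty) simp
  qed (auto simp: prod_zero_iff in_keys_iff)
  moreover have "Poly_Mapping.lookup m k \<noteq> 0" using k by (simp add: in_keys_iff)
  moreover have "Poly_Mapping.lookup m k = 1 \<and> Poly_Mapping.keys m - {k} = {} \<longleftrightarrow> m = Poly_Mapping.single k 1"
    unfolding single_one_eq_iff_keys using k by blast
  ultimately show ?thesis
    by (cases "Poly_Mapping.lookup m k = 1")
       (auto simp: lin_coeff_mult const_coeff_mult const_coeff_power const_coeff_prod)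
qed

lemma lin_coeff_mD:
  "lin_coeff q (mD p) = (if q = 0 then 0 else lin_coeff (q - 1) p)"
proof -
  have monom: "lin_coeff q (\<Sum>k\<in>Poly_Mapping.keys m. of_nat (Poly_Mapping.lookup m k) * mvar (Suc k)
        * mvar k ^ (Poly_Mapping.lookup m k - 1) * (\<Prod>l\<in>Poly_Mapping.keys m - {k}. mvar l ^ Poly_Mapping.lookup m l))
     = (if q \<noteq> 0 \<and> m = Poly_Mapping.single (q - 1) 1 then 1 else 0)" for m
  proof -
    have "lin_coeff q (\<Sum>k\<in>Poly_Mapping.keys m. of_nat (Poly_Mapping.lookup m k) * mvar (Suc k)
        * mvar k ^ (Poly_Mapping.lookup m k - 1) * (\<Prod>l\<in>Poly_Mapping.keys m - {k}. mvar l ^ Poly_Mapping.lookup m l))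
       = (\<Sum>k\<in>Poly_Mapping.keys m. if q = Suc k \<and> m = Poly_Mapping.single k 1 then 1 else 0)"
      unfolding lin_coeff_sum by (intro sum.cong refl lin_coeff_mD_term)
    also have "\<dots> = (if q \<noteq> 0 \<and> m = Poly_Mapping.single (q - 1) 1 then 1 else 0)"
      by (cases "q \<noteq> 0 \<and> m = Poly_Mapping.single (q - 1) 1") (auto intro!: sum.neutral)
    finally show ?thesis .
  qed
  have "lin_coeff q (mD p) = (\<Sum>m\<in>Poly_Mapping.keys p.
      Poly_Mapping.lookup p m * (if q \<noteq> 0 \<and> m = Poly_Mapping.single (q - 1) 1 then 1 else 0))"
    unfolding mD_def lin_coeff_sum lin_coeff_mconst_mult
    by (rule sum.cong[OF refl]) (subst monom[unfolded lin_coeff_sum], rule refl)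
  also have "\<dots> = (if q = 0 then 0 else lin_coeff (q - 1) p)"
    by (cases "q = 0") (simp_all add: lin_coeff_def if_distrib sum.delta' in_keys_iff cong: if_cong)
  finally show ?thesis .
qed

lemma const_coeff_P: "const_coeff (P i) = 0"
  by (induction i rule: P.induct) (simp_all add: const_coeff_mD const_coeff_mult)

lemma lin_coeff_P: "lin_coeff q (P (Suc i)) = (if q = i then 1 else 0)"
proof (induction i arbitrary: q)
  case (Suc i)
  have "lin_coeff q (P (Suc (Suc i))) = lin_coeff q (mD (P (Suc i)))"
    by (simp add: lin_coeff_mult const_coeff_mult const_coeff_P)
  then show ?case
    using Suc[of "q - 1"] by (auto simp: lin_coeff_mD)
qed simp

section \<open>Polynomials in the parameter\<close>

fun reflect_quot_monom :: "nat \<Rightarrow> 'a::comm_ring_1 poly" where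
  "reflect_quot_monom 0 = 0"
| "reflect_quot_monom (Suc 0) = 1"
| "reflect_quot_monom (Suc (Suc d)) = reflect_quot_monom (Suc d) + [:0, 1:] * reflect_quot_monom d"

lemma poly_reflect_quot_monom:
  "x ^ d - (1 - x) ^ d = (2 * x - 1) * poly (reflect_quot_monom d) (x * (x - 1))"
  for x :: "'a::comm_ring_1"
proof (induction d rule: reflect_quot_monom.induct)
  case (3 d)
  have "x ^ Suc (Suc d) - (1 - x) ^ Suc (Suc d) =
      (x ^ Suc d - (1 - x) ^ Suc d) + x * (x - 1) * (x ^ d - (1 - x) ^ d)"
    by (simp add: algebra_simps)
  also have "\<dots> = (2 * x - 1) * poly (reflect_quot_monom (Suc d)) (x * (x - 1)) +
      x * (x - 1) * ((2 * x - 1) * poly (reflect_quot_monom d) (x * (x - 1)))"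
    using 3 by simp
  also have "\<dots> = (2 * x - 1) * poly (reflect_quot_monom (Suc (Suc d))) (x * (x - 1))"
    by (simp add: algebra_simps)
  finally show ?case .
qed simp_all

lemma degree_reflect_quot_monom: "degree (reflect_quot_monom d :: 'a::comm_ring_1 poly) \<le> (d - 1) div 2"
proof (induction d rule: reflect_quot_monom.induct)
  case (3 d)
  have "degree ([:0, 1:] * reflect_quot_monom d :: 'a poly) \<le> 1 + degree (reflect_quot_monom d :: 'a poly)"
    using degree_mult_le[of "[:0, 1:]" "reflect_quot_monom d :: 'a poly"] by simp
  then show ?case
    using 3 degree_add_le[of "reflect_quot_monom (Suc d) :: 'a poly"] by (cases d) fastforce+
qed simp_all

definition reflect_quot :: "'a::comm_ring_1 poly \<Rightarrow> 'a poly" where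
  "reflect_quot p = (\<Sum>d\<le>degree p. smult (coeff p d) (reflect_quot_monom d))"

text \<open>Since \<open>p(x) - p(1 - x)\<close> is odd under the reflection \<open>x \<mapsto> 1 - x\<close>, it is \<open>2x - 1\<close> times a
  polynomial in the invariant \<open>x(x - 1)\<close>; with \<open>x = j\<close> these are the factor \<open>u\<close> and the
  variable \<open>v\<close> of the statement.\<close>

lemma poly_reflect_quot:
  "poly p x - poly p (1 - x) = (2 * x - 1) * poly (reflect_quot p) (x * (x - 1))"
proof -
  have "poly p x - poly p (1 - x) = (\<Sum>d\<le>degree p. coeff p d * (x ^ d - (1 - x) ^ d))"
    by (simp add: poly_altdef sum_subtractf algebra_simps)
  also have "\<dots> = (2 * x - 1) * poly (reflect_quot p) (x * (x - 1))"
    by (simp add: poly_reflect_quot_monom reflect_quot_def poly_sum sum_distrib_left algebra_simps)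
  finally show ?thesis .
qed

lemma degree_reflect_quot: "degree p \<le> 2 * n + 2 \<Longrightarrow> degree (reflect_quot p) \<le> n"
  for p :: "'a::comm_ring_1 poly"
  unfolding reflect_quot_def
proof (intro degree_sum_le)
  fix d assume "degree p \<le> 2 * n + 2" "d \<in> {..degree p}"
  then have "(d - 1) div 2 \<le> n" by auto
  then show "degree (smult (coeff p d) (reflect_quot_monom d)) \<le> n"
    using degree_reflect_quot_monom[of d, where 'a='a] degree_smult_le[of "coeff p d" "reflect_quot_monom d"] by linarith
qed simp

definition is_antidiff :: "'a::comm_ring_1 poly \<Rightarrow> 'a poly \<Rightarrow> bool" where
  "is_antidiff p q \<longleftrightarrow> (\<forall>x. poly q (x + 1) - poly q x = poly p x) \<and> poly q 0 = 0 \<and> degree q \<le> degree p + 1"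

lemma antidiff_monom_exists:
  "\<exists>F::'a::field_char_0 poly. is_antidiff (monom 1 d) F"
proof (induction d rule: less_induct)
  case (less d)
  obtain Fs :: "nat \<Rightarrow> 'a poly" where Fs: "\<And>i. i < d \<Longrightarrow> is_antidiff (monom 1 i) (Fs i)"
    using less by metis
  define F where
    "F = smult (1 / of_nat (Suc d)) (monom 1 (Suc d) - (\<Sum>i<d. smult (of_nat (Suc d choose i)) (Fs i)))"
  have binom: "(x + 1) ^ Suc d = (\<Sum>i<d. of_nat (Suc d choose i) * x ^ i) + of_nat (Suc d) * x ^ d + x ^ Suc d"
    for x :: 'a
    using binomial_ring[of x 1 "Suc d"] by (simp add: lessThan_Suc_atMost[symmetric])
  have "poly F (x + 1) - poly F x = x ^ d" for x
  proof -
    have "poly F (x + 1) - poly F x = (1 / of_nat (Suc d)) * (((x + 1) ^ Suc d - x ^ Suc d) -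
        (\<Sum>i<d. of_nat (Suc d choose i) * (poly (Fs i) (x + 1) - poly (Fs i) x)))"
      by (simp add: F_def poly_sum poly_monom algebra_simps sum_subtractf sum_distrib_left)
    also have "(\<Sum>i<d. of_nat (Suc d choose i) * (poly (Fs i) (x + 1) - poly (Fs i) x)) =
        (\<Sum>i<d. of_nat (Suc d choose i) * x ^ i)"
      using Fs by (intro sum.cong refl) (simp add: is_antidiff_def poly_monom)
    finally show ?thesis
      by (simp only: binom) (simp del: of_nat_Suc)
  qed
  moreover have "poly F 0 = 0"
    using Fs by (simp add: F_def poly_sum poly_monom is_antidiff_def)
  moreover have "degree F \<le> d + 1"
  proof -
    have "degree (smult (of_nat (Suc d choose i)) (Fs i)) \<le> d + 1" if "i < d" for i
    proof -
      have "degree (Fs i) \<le> d + 1" using Fs[OF that] that by (simp add: is_antidiff_def degree_monom_eq)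
      then show ?thesis using degree_smult_le order_trans by blast
    qed
    then have "degree (\<Sum>i<d. smult (of_nat (Suc d choose i)) (Fs i)) \<le> d + 1"
      by (intro degree_sum_le) auto
    then have "degree (monom 1 (Suc d) - (\<Sum>i<d. smult (of_nat (Suc d choose i)) (Fs i))) \<le> d + 1"
      using degree_diff_le[of "monom (1::'a) (Suc d)" "d + 1"] degree_monom_le[of "1::'a" "Suc d"] by simp
    then show ?thesis unfolding F_def using degree_smult_le order_trans by blast
  qed
  ultimately show ?case by (auto simp: is_antidiff_def poly_monom degree_monom_eq)
qed

lemma antidiff_exists: "\<exists>q. is_antidiff (p :: 'a::field_char_0 poly) q"
proof -
  obtain F :: "nat \<Rightarrow> 'a poly" where F: "\<And>d. is_antidiff (monom 1 d) (F d)"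
    using antidiff_monom_exists by metis
  define q where "q = (\<Sum>d\<le>degree p. smult (coeff p d) (F d))"
  have F_diff: "poly (F d) (x + 1) - poly (F d) x = x ^ d" for d x
    using F[of d] by (simp add: is_antidiff_def poly_monom)
  have "poly q (x + 1) - poly q x = (\<Sum>d\<le>degree p. coeff p d * (poly (F d) (x + 1) - poly (F d) x))" for x
    by (simp add: q_def poly_sum sum_subtractf algebra_simps)
  also have "\<dots> x = poly p x" for x
    by (simp add: F_diff) (simp add: poly_altdef)
  finally have "poly q (x + 1) - poly q x = poly p x" for x .
  moreover have "poly q 0 = 0" using F by (simp add: q_def poly_sum is_antidiff_def)
  moreover have "degree q \<le> degree p + 1"
    unfolding q_def
  proof (rule degree_sum_le)
    fix d assume "d \<in> {..degree p}"
    then show "degree (smult (coeff p d) (F d)) \<le> degree p + 1"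
      using F[of d] degree_smult_le[of "coeff p d" "F d"] by (auto simp: is_antidiff_def degree_monom_eq)
  qed simp
  ultimately show ?thesis unfolding is_antidiff_def by blast
qed

definition antidiff :: "'a::field_char_0 poly \<Rightarrow> 'a poly" where
  "antidiff p = (SOME q. is_antidiff p q)"

lemma is_antidiff_antidiff: "is_antidiff p (antidiff p)"
  unfolding antidiff_def using antidiff_exists by (rule someI_ex)

lemma poly_antidiff_diff: "poly (antidiff p) (x + 1) - poly (antidiff p) x = poly p x"
  and poly_antidiff_0 [simp]: "poly (antidiff p) 0 = 0"
  and degree_antidiff: "degree (antidiff p) \<le> degree p + 1"
  using is_antidiff_antidiff[of p] by (simp_all add: is_antidiff_def)

text \<open>\<open>poly (psi l) t\<close> is the coefficient of \<open>x\<^sup>l\<close> in \<open>\<Prod>i<t. (1 + i x)\<^sup>-\<^sup>1\<close>: these coefficients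
  are determined by \<open>\<Psi>\<^sub>0 = 1\<close> and the functional equation \<open>(1 + t x) \<Psi>\<^sub>t\<^sub>+\<^sub>1 = \<Psi>\<^sub>t\<close>, which
  \<open>psi\<close> solves as a polynomial identity in \<open>t\<close>.\<close>

primrec psi :: "nat \<Rightarrow> 'a::field_char_0 poly" where
  "psi 0 = 1"
| "psi (Suc l) = antidiff (- ([:0, 1:] * pcompose (psi l) [:1, 1:]))"

lemma poly_psi_Suc_diff:
  "poly (psi (Suc l)) (x + 1) - poly (psi (Suc l)) x = - x * poly (psi l) (x + 1)"
proof -
  have "poly (- ([:0, 1:] * pcompose (psi l) [:1, 1:])) x = - x * poly (psi l) (x + 1)"
    by (simp add: poly_pcompose add.commute)
  then show ?thesis
    by (simp only: psi.simps poly_antidiff_diff)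
qed

lemma poly_psi_0: "poly (psi l) 0 = (if l = 0 then 1 else 0)"
  by (cases l) simp_all

lemma degree_psi: "degree (psi l) \<le> 2 * l"
proof (induction l)
  case (Suc l)
  have "degree (- ([:0, 1:] * pcompose (psi l) [:1, 1::'a:])) \<le> 1 + degree (psi l :: 'a poly)"
    using degree_mult_le[of "[:0, 1::'a:]" "pcompose (psi l) [:1, 1:]"] by (simp add: degree_pcompose)
  then show ?case
    using Suc degree_antidiff[of "- ([:0, 1:] * pcompose (psi l) [:1, 1::'a:])"] by simp
qed simp

lemma poly_psi_1: "poly (psi l) 1 = poly (psi l) 0"
proof (cases l)
  case (Suc k) then show ?thesis using poly_psi_Suc_diff[of k 0] by simp
qed simp

lemma poly_psi_2: "poly (psi l) 2 = (-1) ^ l"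
proof (induction l)
  case (Suc l)
  have "poly (psi (Suc l)) 2 = poly (psi (Suc l)) 1 - poly (psi l) (2::'a)"
    using poly_psi_Suc_diff[of l 1] by (simp add: algebra_simps)
  then show ?case
    using Suc poly_psi_1[of "Suc l"] poly_psi_0[of "Suc l"] by simp
qed simp

lemma poly_psi_minus_1: "poly (psi (Suc l)) (-1) = (if l = 0 then -1 else 0)"
proof -
  have "poly (psi (Suc l)) 0 - poly (psi (Suc l)) (-1) = poly (psi l) (0::'a)"
    using poly_psi_Suc_diff[of l "-1"] by simp
  then have "- poly (psi (Suc l)) (-1) = poly (psi l) (0::'a)"
    by (simp only: poly_psi_0[of "Suc l"]) simp
  then have "poly (psi (Suc l)) (-1) = - poly (psi l) (0::'a)"
    by (metis minus_minus)
  then show ?thesis by (simp add: poly_psi_0)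
qed

declare psi.simps(2) [simp del]

definition binom_poly :: "nat \<Rightarrow> 'a::field_char_0 poly" where
  "binom_poly k = smult (1 / fact k) (\<Prod>i<k. [:- of_nat i, 1:])"

lemma poly_binom_poly: "poly (binom_poly k) x = x gchoose k"
proof -
  have "(x gchoose k) * fact k = (\<Prod>i = 0..<k. x - of_nat i)" by (rule gbinomial_mult_fact')
  then show ?thesis
    by (simp add: binom_poly_def poly_prod atLeast0LessThan field_simps)
qed

lemma degree_binom_poly: "degree (binom_poly k) \<le> k"
proof -
  have "degree (\<Prod>i<k. [:- of_nat i, 1::'a:]) \<le> (\<Sum>i<k. degree [:- of_nat i, 1::'a:])"
    using degree_prod_sum_le[of "{..<k}" "\<lambda>i. [:- of_nat i, 1::'a:]"] by (simp add: o_def)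
  then show ?thesis unfolding binom_poly_def using degree_smult_le order_trans by fastforce
qed

section \<open>The series G and H as values of one family\<close>

definition ax2 :: "mpoly fps" where
  "ax2 = aser * fps_X ^ 2"

lemma ax2_nth: "ax2 $ i = (if 2 \<le> i then mvar (i - 2) else 0)"
  by (simp add: ax2_def fps_X_power_mult_right_nth aser_def)

lemma ax2_power_nth_less: "i < k \<Longrightarrow> (ax2 ^ k) $ i = 0"
proof -
  assume "i < k"
  have "ax2 ^ k = aser ^ k * fps_X ^ (2 * k)"
    by (simp only: ax2_def power_mult_distrib power_mult)
  then show ?thesis
    using \<open>i < k\<close> by (simp only: fps_X_power_mult_right_nth) simp
qed

lemma fps_mult_nth_eqI:
  assumes "\<And>i. i \<le> N \<Longrightarrow> f $ i = g $ i"
  shows "(f * h) $ N = (g * h) $ N"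
  unfolding fps_mult_nth using assms by (intro sum.cong refl) simp

lemma fps_inv1_right:
  assumes "f $ 0 = 1" shows "f * fps_inv1 f = 1"
proof -
  have inv: "f * fps_right_inverse f 1 = 1" by (rule fps_right_inverse) (simp add: assms)
  have "fps_inv1 f = fps_right_inverse f 1"
    unfolding fps_inv1_def
  proof (rule the_equality)
    fix g assume "f * g = 1"
    then have "g = g * (f * fps_right_inverse f 1)" using inv by simp
    also have "\<dots> = (f * g) * fps_right_inverse f 1" by (simp add: mult_ac)
    finally show "g = fps_right_inverse f 1" using \<open>f * g = 1\<close> by simp
  qed (rule inv)
  then show ?thesis using inv by simp
qed

text \<open>\<open>binom_ser t\<close> is \<open>(1 + a(x) x\<^sup>2)\<^sup>t\<close> for an arbitrary integer \<open>t\<close>. The \<open>k\<close>-th binomial term is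
  divisible by \<open>x\<^sup>2\<^sup>k\<close>, so the coefficient of \<open>x\<^sup>N\<close> is already that of the partial sum up to \<open>k = N\<close>.\<close>

definition gbinom_const :: "int \<Rightarrow> nat \<Rightarrow> mpoly fps" where
  "gbinom_const t k = fps_const (mconst (of_int t gchoose k))"

definition binom_trunc :: "int \<Rightarrow> nat \<Rightarrow> mpoly fps" where
  "binom_trunc t M = (\<Sum>k\<le>M. gbinom_const t k * ax2 ^ k)"

definition binom_ser :: "int \<Rightarrow> mpoly fps" where
  "binom_ser t = Abs_fps (\<lambda>N. binom_trunc t N $ N)"

lemma gbinom_const_0 [simp]: "gbinom_const t 0 = 1"
  by (simp add: gbinom_const_def fps_const_1_eq_1)

lemma gbinom_const_pascal: "gbinom_const (t + 1) (Suc k) = gbinom_const t k + gbinom_const t (Suc k)"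
  using gbinomial_Suc_Suc[of "of_int t :: rat" k] by (simp add: gbinom_const_def mconst_add)

lemma binom_trunc_nth_stable: "N \<le> M \<Longrightarrow> binom_trunc t M $ N = binom_trunc t N $ N"
proof (induction M)
  case (Suc M)
  show ?case
  proof (cases "N \<le> M")
    case True
    then have "(gbinom_const t (Suc M) * ax2 ^ Suc M) $ N = 0"
      using ax2_power_nth_less[of N "Suc M"] by (simp add: gbinom_const_def del: power_Suc)
    then show ?thesis
      using Suc.IH True by (simp add: binom_trunc_def)
  next
    case False then show ?thesis using Suc by (simp add: le_Suc_eq)
  qed
qed simp

lemma binom_ser_nth: "N \<le> M \<Longrightarrow> binom_ser t $ N = binom_trunc t M $ N"
  unfolding binom_ser_def fps_nth_Abs_fps by (rule binom_trunc_nth_stable[symmetric])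

lemma binom_trunc_mult:
  "binom_trunc t M * (1 + ax2) = binom_trunc (t + 1) (Suc M) - gbinom_const t (Suc M) * ax2 ^ Suc M"
proof (induction M)
  case 0
  then show ?case using gbinom_const_pascal[of t 0] by (simp add: binom_trunc_def algebra_simps)
next
  case (Suc M)
  have "binom_trunc t (Suc M) * (1 + ax2) = binom_trunc t M * (1 + ax2) + gbinom_const t (Suc M) * ax2 ^ Suc M * (1 + ax2)"
    by (simp add: binom_trunc_def algebra_simps)
  also have "\<dots> = binom_trunc (t + 1) (Suc M) + gbinom_const t (Suc M) * ax2 ^ Suc (Suc M)"
    using Suc by (simp add: algebra_simps)
  also have "\<dots> = binom_trunc (t + 1) (Suc (Suc M)) - gbinom_const t (Suc (Suc M)) * ax2 ^ Suc (Suc M)"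
    using gbinom_const_pascal[of t "Suc M"] by (simp add: binom_trunc_def algebra_simps)
  finally show ?case .
qed

lemma binom_ser_plus_1: "binom_ser (t + 1) = binom_ser t * (1 + ax2)"
proof (rule fps_ext)
  fix N
  have "(binom_ser t * (1 + ax2)) $ N = (binom_trunc t N * (1 + ax2)) $ N"
    by (rule fps_mult_nth_eqI) (simp add: binom_ser_nth)
  also have "\<dots> = binom_trunc (t + 1) (Suc N) $ N"
    by (simp add: binom_trunc_mult gbinom_const_def ax2_power_nth_less del: power_Suc)
  also have "\<dots> = binom_ser (t + 1) $ N" by (rule binom_ser_nth[symmetric]) simp
  finally show "binom_ser (t + 1) $ N = (binom_ser t * (1 + ax2)) $ N" ..
qed

lemma binom_ser_0: "binom_ser 0 = 1"
proof (rule fps_ext)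
  fix N
  have "binom_trunc 0 N = 1"
    unfolding binom_trunc_def gbinom_const_def
    by (simp add: gbinomial_0_left sum.atMost_shift del: sum.atMost_Suc)
  then show "binom_ser 0 $ N = 1 $ N" by (simp add: binom_ser_def)
qed

definition psi_ser :: "int \<Rightarrow> mpoly fps" where
  "psi_ser t = Abs_fps (\<lambda>l. mconst (poly (psi l) (of_int t)))"

lemma psi_ser_plus_1: "psi_ser (t + 1) * (1 + of_int t * fps_X) = psi_ser t"
proof (rule fps_ext)
  fix N
  have "(psi_ser (t + 1) * (1 + of_int t * fps_X)) $ N = psi_ser (t + 1) $ N + of_int t * (fps_X * psi_ser (t + 1)) $ N"
    by (simp add: algebra_simps fps_of_int[symmetric])
  also have "\<dots> = psi_ser t $ N"
  proof (cases N)
    case (Suc l)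
    have "poly (psi (Suc l)) (of_int t + 1) + of_int t * poly (psi l) (of_int t + 1) = poly (psi (Suc l)) (of_int t :: rat)"
      using poly_psi_Suc_diff[of l "of_int t"] by (simp add: algebra_simps)
    then have "mconst (poly (psi (Suc l)) (of_int t + 1)) + of_int t * mconst (poly (psi l) (of_int t + 1)) =
        mconst (poly (psi (Suc l)) (of_int t))"
      by (metis mconst_add mconst_mult mconst_of_int)
    then show ?thesis using Suc by (simp add: psi_ser_def)
  qed (simp add: psi_ser_def)
  finally show "(psi_ser (t + 1) * (1 + of_int t * fps_X)) $ N = psi_ser t $ N" .
qed

lemma psi_ser_0: "psi_ser 0 = 1"
  by (rule fps_ext) (simp add: psi_ser_def poly_psi_0)

text \<open>\<open>phi_ser t\<close> extends \<open>t \<mapsto> \<Prod>i<t. (1 + a(x) x\<^sup>2) / (1 + i x)\<close> to all integers \<open>t\<close>;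
  then \<open>G = phi_ser j\<close> and \<open>H = phi_ser (1 - j)\<close>, and every coefficient of \<open>phi_ser t\<close> is a
  polynomial in \<open>t\<close>.\<close>

definition phi_ser :: "int \<Rightarrow> mpoly fps" where
  "phi_ser t = binom_ser t * psi_ser t"

lemma phi_ser_plus_1: "phi_ser (t + 1) * (1 + of_int t * fps_X) = phi_ser t * (1 + ax2)"
  by (simp add: phi_ser_def binom_ser_plus_1 mult.assoc psi_ser_plus_1)

lemma phi_ser_0: "phi_ser 0 = 1"
  by (simp add: phi_ser_def binom_ser_0 psi_ser_0)

lemma Gser_eq_phi_ser: "Gser j = phi_ser (int j)"
proof (induction j)
  case 0 then show ?case by (simp add: Gser_def phi_ser_0)
next
  case (Suc j)
  have inv: "(1 + of_nat j * fps_X) * fps_inv1 (1 + of_nat j * fps_X) = (1 :: mpoly fps)"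
    by (rule fps_inv1_right) simp
  have "Gser (Suc j) = phi_ser (int j) * (1 + ax2) * fps_inv1 (1 + of_nat j * fps_X)"
    using Suc by (simp add: Gser_def ax2_def mult.assoc)
  also have "\<dots> = phi_ser (int j + 1) * ((1 + of_nat j * fps_X) * fps_inv1 (1 + of_nat j * fps_X))"
    using phi_ser_plus_1[of "int j"] by (simp add: mult.assoc)
  also have "\<dots> = phi_ser (int (Suc j))" using inv by (simp add: add.commute)
  finally show ?case .
qed

lemma Hser_Suc_eq_phi_ser: "Hser (Suc j) = phi_ser (- int j)"
proof (induction j)
  case 0 then show ?case by (simp add: Hser_def phi_ser_0)
next
  case (Suc j)
  have inv: "(1 + ax2) * fps_inv1 (1 + ax2) = 1"
    by (rule fps_inv1_right) (simp add: ax2_nth)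
  have range: "{1 - int (Suc (Suc j))..-1} = insert (- int (Suc j)) {1 - int (Suc j)..-1}" by auto
  have "Hser (Suc (Suc j)) = (1 + of_int (- int (Suc j)) * fps_X) * fps_inv1 (1 + ax2) * Hser (Suc j)"
    unfolding Hser_def range by (subst prod.insert) (auto simp: ax2_def)
  also have "\<dots> = fps_inv1 (1 + ax2) * (phi_ser (- int (Suc j) + 1) * (1 + of_int (- int (Suc j)) * fps_X))"
    using Suc by (simp add: mult_ac)
  also have "\<dots> = fps_inv1 (1 + ax2) * (1 + ax2) * phi_ser (- int (Suc j))"
    by (simp only: phi_ser_plus_1) (simp add: mult_ac)
  also have "\<dots> = phi_ser (- int (Suc j))" using inv by (simp add: mult_ac)
  finally show ?case .
qed

lemma Hser_eq_phi_ser: "1 \<le> j \<Longrightarrow> Hser j = phi_ser (1 - int j)"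
  using Hser_Suc_eq_phi_ser[of "j - 1"] by (cases j) auto

section \<open>Coefficients of the family\<close>

lemma phi_ser_nth:
  "phi_ser t $ N = (\<Sum>i\<le>N. \<Sum>k\<le>i. mconst (poly (binom_poly k * psi (N - i)) (of_int t)) * (ax2 ^ k $ i))"
proof -
  have "binom_ser t $ i = (\<Sum>k\<le>i. mconst (of_int t gchoose k) * (ax2 ^ k $ i))" for i
    using binom_ser_nth[of i i t] by (simp add: binom_trunc_def fps_sum_nth gbinom_const_def)
  then have "phi_ser t $ N = (\<Sum>i\<le>N. (\<Sum>k\<le>i. mconst (of_int t gchoose k) * (ax2 ^ k $ i)) *
      mconst (poly (psi (N - i)) (of_int t)))"
    by (simp add: phi_ser_def fps_mult_nth atLeast0AtMost psi_ser_def)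
  then show ?thesis
    by (simp add: sum_distrib_right sum_distrib_left poly_binom_poly mconst_mult mult_ac)
qed

lemma const_coeff_ax2_nth [simp]: "const_coeff (ax2 $ i) = 0"
  and lin_coeff_ax2_nth: "lin_coeff q (ax2 $ i) = (if i = q + 2 then 1 else 0)"
  by (auto simp: ax2_nth)

lemma const_coeff_ax2_power_nth: "const_coeff (ax2 ^ k $ i) = (if k = 0 \<and> i = 0 then 1 else 0)"
proof (cases k)
  case (Suc k')
  have "const_coeff (ax2 ^ k $ i) = (\<Sum>a\<in>{0..i}. const_coeff (ax2 $ a) * const_coeff (ax2 ^ k' $ (i - a)))"
    by (simp add: Suc fps_mult_nth const_coeff_sum const_coeff_mult)
  then show ?thesis using Suc by simp
qed simp

lemma lin_coeff_ax2_power_nth: "lin_coeff q (ax2 ^ k $ i) = (if k = 1 \<and> i = q + 2 then 1 else 0)"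
proof (cases k)
  case (Suc k')
  have "lin_coeff q (ax2 ^ k $ i) = (\<Sum>a\<in>{0..i}.
      const_coeff (ax2 $ a) * lin_coeff q (ax2 ^ k' $ (i - a)) + lin_coeff q (ax2 $ a) * const_coeff (ax2 ^ k' $ (i - a)))"
    by (simp add: Suc fps_mult_nth lin_coeff_sum lin_coeff_mult)
  also have "\<dots> = (\<Sum>a\<in>{0..i}. if a = i then (if k' = 0 \<and> i = q + 2 then 1 else 0) else 0)"
    by (intro sum.cong refl) (auto simp: lin_coeff_ax2_nth const_coeff_ax2_power_nth)
  finally show ?thesis using Suc by simp
qed simp

lemma const_coeff_one_plus_ax2_nth: "const_coeff ((1 + ax2) $ r) = (if r = 0 then 1 else 0)"
  and lin_coeff_one_plus_ax2_nth: "lin_coeff q ((1 + ax2) $ r) = (if r = q + 2 then 1 else 0)"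
  by (simp_all add: lin_coeff_ax2_nth)

lemma const_coeff_phi_ser_nth: "const_coeff (phi_ser t $ N) = poly (psi N) (of_int t)"
proof -
  have "const_coeff (phi_ser t $ N) = (\<Sum>i\<le>N. \<Sum>k\<le>i.
      poly (binom_poly k * psi (N - i)) (of_int t) * (if k = 0 \<and> i = 0 then 1 else 0))"
    by (simp add: phi_ser_nth const_coeff_sum const_coeff_ax2_power_nth)
  also have "\<dots> = (\<Sum>i\<le>N. if i = 0 then poly (binom_poly 0 * psi N) (of_int t) else 0)"
    by (intro sum.cong refl) auto
  also have "\<dots> = poly (psi N) (of_int t)" by (simp add: poly_binom_poly)
  finally show ?thesis .
qed

lemma lin_coeff_phi_ser_nth:
  "lin_coeff q (phi_ser t $ N) = (if q + 2 \<le> N then of_int t * poly (psi (N - q - 2)) (of_int t) else 0)"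
proof -
  have "lin_coeff q (phi_ser t $ N) = (\<Sum>i\<le>N. \<Sum>k\<le>i.
      poly (binom_poly k * psi (N - i)) (of_int t) * (if k = 1 \<and> i = q + 2 then 1 else 0))"
    by (simp add: phi_ser_nth lin_coeff_sum lin_coeff_ax2_power_nth)
  also have "\<dots> = (\<Sum>i\<le>N. if i = q + 2 then poly (binom_poly 1 * psi (N - i)) (of_int t) else 0)"
    by (intro sum.cong refl) (auto simp: if_distrib[of "(*) _"] cong: if_cong)
  also have "\<dots> = (if q + 2 \<le> N then of_int t * poly (psi (N - q - 2)) (of_int t) else 0)"
    by (simp add: poly_binom_poly)
  finally show ?thesis .
qed

definition GH_shift_nth :: "nat \<Rightarrow> nat \<Rightarrow> mpoly" where
  "GH_shift_nth j i = phi_ser (int j) $ (i + 2) - phi_ser (1 - int j) $ (i + 2)"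

lemma lhs_coeff_eq_sum:
  "1 \<le> j \<Longrightarrow> lhs_coeff j n = (\<Sum>i\<le>n - 1. GH_shift_nth j i * (1 + ax2) $ (n - 1 - i))"
  unfolding lhs_coeff_def ax2_def[symmetric]
  by (simp add: fps_mult_nth Gser_eq_phi_ser Hser_eq_phi_ser GH_shift_nth_def atLeast0AtMost)

lemma lin_coeff_lhs_coeff:
  assumes "1 \<le> j" "1 \<le> n"
  shows "lin_coeff q (lhs_coeff j n) =
    (\<Sum>i\<le>n - 1. if n - 1 - i = q + 2 then const_coeff (GH_shift_nth j i) else 0) + lin_coeff q (GH_shift_nth j (n - 1))"
proof -
  have "lin_coeff q (lhs_coeff j n) = (\<Sum>i\<le>n - 1. (if n - 1 - i = q + 2 then const_coeff (GH_shift_nth j i) else 0)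
      + (if i = n - 1 then lin_coeff q (GH_shift_nth j i) else 0))"
    unfolding lhs_coeff_eq_sum[OF assms(1)] lin_coeff_sum lin_coeff_mult
      const_coeff_one_plus_ax2_nth lin_coeff_one_plus_ax2_nth
    by (intro sum.cong refl) auto
  then show ?thesis by (simp add: sum.distrib)
qed

lemma const_coeff_lhs_coeff:
  assumes "1 \<le> j" "1 \<le> n"
  shows "const_coeff (lhs_coeff j n) = poly (psi (n + 1)) (of_nat j) - poly (psi (n + 1)) (1 - of_nat j)"
proof -
  have "const_coeff (lhs_coeff j n) = (\<Sum>i\<le>n - 1. if i = n - 1 then const_coeff (GH_shift_nth j i) else 0)"
    unfolding lhs_coeff_eq_sum[OF assms(1)] const_coeff_sum const_coeff_mult const_coeff_one_plus_ax2_nth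
    by (intro sum.cong refl) auto
  then show ?thesis
    using assms by (simp add: GH_shift_nth_def const_coeff_phi_ser_nth)
qed

lemma lin_coeff_last_lhs_coeff:
  assumes "1 \<le> j" "1 \<le> n"
  shows "lin_coeff (n - 1) (lhs_coeff j n) = 2 * of_nat j - 1"
proof -
  have "(\<Sum>i\<le>n - 1. if n - 1 - i = n - 1 + 2 then const_coeff (GH_shift_nth j i) else 0) = 0"
    by (intro sum.neutral) auto
  then show ?thesis
    using assms by (simp add: lin_coeff_lhs_coeff GH_shift_nth_def lin_coeff_phi_ser_nth)
qed

lemma lin_coeff_lhs_coeff_1:
  assumes "1 \<le> n"
  shows "lin_coeff q (lhs_coeff 1 n) = (if q = n - 1 then 1 else 0)"
proof -
  have "const_coeff (GH_shift_nth 1 i) = 0" for i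
    by (simp add: GH_shift_nth_def const_coeff_phi_ser_nth poly_psi_1)
  then have "(\<Sum>i\<le>n - 1. if n - 1 - i = q + 2 then const_coeff (GH_shift_nth 1 i) else 0) = 0"
    by (intro sum.neutral) auto
  moreover have "lin_coeff q (GH_shift_nth 1 (n - 1)) = (if q = n - 1 then 1 else 0)"
    using assms by (auto simp: GH_shift_nth_def lin_coeff_phi_ser_nth poly_psi_0 poly_psi_1)
  ultimately show ?thesis
    using lin_coeff_lhs_coeff[OF _ assms, of 1 q] by simp
qed

section \<open>Weights\<close>

text \<open>Giving \<open>a\<^sub>k\<close> the weight \<open>k + 2\<close> of the power of \<open>x\<close> it comes with in \<open>a(x) x\<^sup>2\<close>, every
  monomial in the coefficient of \<open>x\<^sup>i\<close> of a power of \<open>a(x) x\<^sup>2\<close> has weight at most \<open>i\<close>.\<close>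

definition weight :: "(nat \<Rightarrow>\<^sub>0 nat) \<Rightarrow> nat" where
  "weight m = (\<Sum>k\<in>Poly_Mapping.keys m. Poly_Mapping.lookup m k * (k + 2))"

definition weight_le :: "nat \<Rightarrow> mpoly \<Rightarrow> bool" where
  "weight_le N p \<longleftrightarrow> (\<forall>m\<in>Poly_Mapping.keys p. weight m \<le> N)"

lemma weight_eq_sum_superset:
  "finite K \<Longrightarrow> Poly_Mapping.keys m \<subseteq> K \<Longrightarrow> weight m = (\<Sum>k\<in>K. Poly_Mapping.lookup m k * (k + 2))"
  unfolding weight_def by (rule sum.mono_neutral_left) (auto simp: in_keys_iff)

lemma weight_add: "weight (a + b) = weight a + weight b"
proof -
  let ?K = "Poly_Mapping.keys a \<union> Poly_Mapping.keys b"
  have "weight (a + b) = (\<Sum>k\<in>?K. Poly_Mapping.lookup (a + b) k * (k + 2))"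
    by (rule weight_eq_sum_superset) (auto dest: set_mp[OF keys_add])
  also have "\<dots> = weight a + weight b"
    by (simp add: lookup_add sum.distrib algebra_simps weight_eq_sum_superset[of ?K])
  finally show ?thesis .
qed

lemma weight_0 [simp]: "weight 0 = 0"
  and weight_single [simp]: "weight (Poly_Mapping.single k 1) = k + 2"
  by (simp_all add: weight_def)

lemma weight_le_0 [simp]: "weight_le N 0"
  by (simp add: weight_le_def)

lemma weight_le_mult: "weight_le a p \<Longrightarrow> weight_le b q \<Longrightarrow> weight_le (a + b) (p * q)"
  unfolding weight_le_def using keys_mult[of p q] by (force simp: weight_add intro: add_mono)

lemma weight_le_add: "weight_le N p \<Longrightarrow> weight_le N q \<Longrightarrow> weight_le N (p + q)"
  unfolding weight_le_def using keys_add[of p q] by blast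

lemma weight_le_sum: "(\<And>x. x \<in> A \<Longrightarrow> weight_le N (f x)) \<Longrightarrow> weight_le N (sum f A)"
  by (induction A rule: infinite_finite_induct) (simp_all add: weight_le_add)

lemma weight_le_mono: "weight_le a p \<Longrightarrow> a \<le> b \<Longrightarrow> weight_le b p"
  by (auto simp: weight_le_def)

lemma weight_le_mconst [simp]: "weight_le N (mconst c)"
  by (simp add: weight_le_def mconst_def)

lemma weight_le_mconst_mult: "weight_le N p \<Longrightarrow> weight_le N (mconst c * p)"
  by (auto simp: weight_le_def in_keys_iff lookup_mconst_mult)

lemma weight_le_mvar: "weight_le (k + 2) (mvar k)"
  by (simp add: weight_le_def mvar_def weight_def)

lemma weight_le_imp_single:
  assumes "weight m \<le> n + 1" "k \<in> Poly_Mapping.keys m" "n - 1 \<le> k" "1 \<le> n"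
  shows "m = Poly_Mapping.single (n - 1) 1"
proof -
  have split: "weight m = Poly_Mapping.lookup m k * (k + 2) +
      (\<Sum>l\<in>Poly_Mapping.keys m - {k}. Poly_Mapping.lookup m l * (l + 2))"
    unfolding weight_def using assms(2) by (simp add: sum.remove)
  have "1 \<le> Poly_Mapping.lookup m k" using assms(2) by (simp add: in_keys_iff)
  then have "1 * (k + 2) \<le> Poly_Mapping.lookup m k * (k + 2)" by (rule mult_le_mono1)
  then have "k + 2 \<le> Poly_Mapping.lookup m k * (k + 2)" by simp
  then have eq: "Poly_Mapping.lookup m k * (k + 2) = k + 2" and "k = n - 1"
    and rest: "(\<Sum>l\<in>Poly_Mapping.keys m - {k}. Poly_Mapping.lookup m l * (l + 2)) = 0"
    using split assms by linarith+
  from eq have "Poly_Mapping.lookup m k * (k + 2) = 1 * (k + 2)" by simp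
  then have "Poly_Mapping.lookup m k = 1" by (subst (asm) mult_cancel2) simp
  moreover have "Poly_Mapping.keys m - {k} = {}"
    using rest by (auto simp: in_keys_iff)
  ultimately show ?thesis
    using assms(2) \<open>k = n - 1\<close> unfolding single_one_eq_iff_keys by blast
qed

lemma weight_le_ax2_nth: "weight_le i (ax2 $ i)"
proof (cases "2 \<le> i")
  case True
  then have "i - 2 + 2 = i" by simp
  then show ?thesis using True weight_le_mvar[of "i - 2"] by (simp add: ax2_nth)
qed (simp add: ax2_nth)

lemma weight_le_ax2_power_nth: "weight_le i (ax2 ^ k $ i)"
proof (induction k arbitrary: i)
  case 0
  then show ?case by (simp add: weight_le_def)
next
  case (Suc k)
  have "weight_le i (ax2 $ a * ax2 ^ k $ (i - a))" if "a \<in> {0..i}" for a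
    using weight_le_mult[OF weight_le_ax2_nth Suc, of a "i - a"] that by simp
  then show ?case unfolding power_Suc fps_mult_nth by (intro weight_le_sum) auto
qed

lemma weight_le_one_plus_ax2_nth: "weight_le r ((1 + ax2) $ r)"
  using weight_le_mconst[of _ 1]
  by (cases "r = 0") (simp_all add: weight_le_add weight_le_ax2_nth)

section \<open>Existence and uniqueness of the S_i(n)\<close>

lemma poly_eq_sum_atMost:
  fixes p :: "'a::comm_semiring_1 poly"
  assumes "degree p \<le> n"
  shows "poly p x = (\<Sum>l\<le>n. coeff p l * x ^ l)"
  unfolding poly_altdef using assms by (intro sum.mono_neutral_left) (auto simp: coeff_eq_0)

lemma sum_poly_reflect_diff:
  fixes p :: "'i \<Rightarrow> rat poly" and M :: "'i \<Rightarrow> mpoly"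
  assumes "finite I" "\<And>x. x \<in> I \<Longrightarrow> degree (p x) \<le> 2 * n + 2"
  shows "(\<Sum>x\<in>I. mconst (poly (p x) r - poly (p x) (1 - r)) * M x) =
     mconst (2 * r - 1) * (\<Sum>l\<le>n. (\<Sum>x\<in>I. mconst (coeff (reflect_quot (p x)) l) * M x) * mconst (r * (r - 1)) ^ l)"
proof -
  have "mconst (poly (p x) r - poly (p x) (1 - r)) =
      mconst (2 * r - 1) * (\<Sum>l\<le>n. mconst (coeff (reflect_quot (p x)) l) * mconst (r * (r - 1)) ^ l)"
    if "x \<in> I" for x
    using poly_reflect_quot[of "p x" r] poly_eq_sum_atMost[OF degree_reflect_quot[OF assms(2)[OF that]]]
    by (simp add: mconst_mult mconst_sum mconst_power)
  then have "(\<Sum>x\<in>I. mconst (poly (p x) r - poly (p x) (1 - r)) * M x) =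
      mconst (2 * r - 1) * (\<Sum>x\<in>I. \<Sum>l\<le>n. mconst (coeff (reflect_quot (p x)) l) * M x * mconst (r * (r - 1)) ^ l)"
    by (simp add: sum_distrib_left sum_distrib_right mult_ac)
  also have "\<dots> = mconst (2 * r - 1) *
      (\<Sum>l\<le>n. (\<Sum>x\<in>I. mconst (coeff (reflect_quot (p x)) l) * M x) * mconst (r * (r - 1)) ^ l)"
    by (subst sum.swap) (simp add: sum_distrib_right)
  finally show ?thesis .
qed

lemma sum_Sigma3:
  assumes "finite A" "\<And>i. finite (B i)" "\<And>i'. finite (C i')"
  shows "(\<Sum>i\<in>A. \<Sum>i'\<in>B i. \<Sum>k\<in>C i'. f (i, i', k)) = (\<Sum>x\<in>Sigma A (\<lambda>i. Sigma (B i) C). f x)"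
  using assms by (simp add: sum.Sigma split_def)

text \<open>The coefficient of \<open>x\<^sup>n\<^sup>-\<^sup>1\<close> in \<open>((G - H)/x\<^sup>2)(1 + a(x) x\<^sup>2)\<close> is a sum over triples
  \<open>(i, i', k)\<close>: \<open>i\<close> picks the coefficient of \<open>(G - H)/x\<^sup>2\<close>, \<open>i'\<close> that of the binomial factor of
  \<open>phi_ser\<close>, and \<open>k\<close> the power of \<open>a(x) x\<^sup>2\<close> in it.\<close>

definition lhs_index :: "nat \<Rightarrow> (nat \<times> nat \<times> nat) set" where
  "lhs_index n = Sigma {..n - 1} (\<lambda>i. Sigma {..i + 2} (\<lambda>i'. {..i'}))"

fun lhs_index_poly :: "nat \<times> nat \<times> nat \<Rightarrow> rat poly" where
  "lhs_index_poly (i, i', k) = binom_poly k * psi (i + 2 - i')"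

fun lhs_index_mpoly :: "nat \<Rightarrow> nat \<times> nat \<times> nat \<Rightarrow> mpoly" where
  "lhs_index_mpoly n (i, i', k) = ax2 ^ k $ i' * (1 + ax2) $ (n - 1 - i)"

definition lhs_v_coeff :: "nat \<Rightarrow> nat \<Rightarrow> mpoly" where
  "lhs_v_coeff n l = (\<Sum>x\<in>lhs_index n. mconst (coeff (reflect_quot (lhs_index_poly x)) l) * lhs_index_mpoly n x)"

lemma degree_lhs_index_poly: "1 \<le> n \<Longrightarrow> x \<in> lhs_index n \<Longrightarrow> degree (lhs_index_poly x) \<le> 2 * n + 2"
proof -
  assume "x \<in> lhs_index n" "1 \<le> n"
  then obtain i i' k where x: "x = (i, i', k)" "i \<le> n - 1" "i' \<le> i + 2" "k \<le> i'"
    by (auto simp: lhs_index_def)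
  have "degree (lhs_index_poly x) \<le> degree (binom_poly k :: rat poly) + degree (psi (i + 2 - i') :: rat poly)"
    unfolding x by (simp add: degree_mult_le)
  also have "\<dots> \<le> k + 2 * (i + 2 - i')" using degree_binom_poly degree_psi add_mono by blast
  also have "\<dots> \<le> 2 * n + 2" using x \<open>1 \<le> n\<close> by auto
  finally show ?thesis .
qed

lemma weight_le_lhs_v_coeff: "1 \<le> n \<Longrightarrow> weight_le (n + 1) (lhs_v_coeff n l)"
  unfolding lhs_v_coeff_def
proof (intro weight_le_sum weight_le_mconst_mult)
  fix x assume "x \<in> lhs_index n" "1 \<le> n"
  then obtain i i' k where x: "x = (i, i', k)" "i \<le> n - 1" "i' \<le> i + 2" "k \<le> i'"
    by (auto simp: lhs_index_def)
  have "weight_le (i' + (n - 1 - i)) (lhs_index_mpoly n x)"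
    unfolding x lhs_index_mpoly.simps
    by (intro weight_le_mult weight_le_ax2_power_nth weight_le_one_plus_ax2_nth)
  then show "weight_le (n + 1) (lhs_index_mpoly n x)"
    by (rule weight_le_mono) (use x \<open>1 \<le> n\<close> in auto)
qed

lemma lhs_coeff_eq_lhs_index_sum:
  assumes "1 \<le> j"
  shows "lhs_coeff j n = (\<Sum>x\<in>lhs_index n.
    mconst (poly (lhs_index_poly x) (of_nat j) - poly (lhs_index_poly x) (1 - of_nat j)) * lhs_index_mpoly n x)"
    (is "_ = (\<Sum>x\<in>_. ?F x)")
proof -
  have "GH_shift_nth j i = (\<Sum>i'\<le>i + 2. \<Sum>k\<le>i'. mconst (poly (binom_poly k * psi (i + 2 - i')) (of_nat j) -
      poly (binom_poly k * psi (i + 2 - i')) (1 - of_nat j)) * (ax2 ^ k $ i'))" for i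
    by (simp add: GH_shift_nth_def phi_ser_nth mconst_diff left_diff_distrib sum_subtractf)
  then have "lhs_coeff j n = (\<Sum>i\<le>n - 1. \<Sum>i'\<le>i + 2. \<Sum>k\<le>i'. ?F (i, i', k))"
    unfolding lhs_coeff_eq_sum[OF assms] lhs_index_poly.simps lhs_index_mpoly.simps
    by (simp only: sum_distrib_right mult.assoc)
  also have "\<dots> = (\<Sum>x\<in>lhs_index n. ?F x)"
    unfolding lhs_index_def by (rule sum_Sigma3) simp_all
  finally show ?thesis .
qed

lemma lhs_coeff_eq_v_expansion:
  assumes "1 \<le> j" "1 \<le> n"
  shows "lhs_coeff j n =
    mconst (2 * of_nat j - 1) * (\<Sum>l\<le>n. lhs_v_coeff n l * mconst (of_nat j * (of_nat j - 1)) ^ l)"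
  unfolding lhs_coeff_eq_lhs_index_sum[OF assms(1)] lhs_v_coeff_def
proof (rule sum_poly_reflect_diff)
  show "finite (lhs_index n)" by (simp add: lhs_index_def)
qed (rule degree_lhs_index_poly[OF assms(2)])

lemma lhs_v_coeff_last_var_sum:
  assumes j: "1 \<le> j" and n: "1 \<le> n"
  shows "(\<Sum>l\<le>n. lin_coeff (n - 1) (lhs_v_coeff n l) * (of_nat j * (of_nat j - 1)) ^ l) = (1::rat)"
proof -
  have "2 * of_nat j - 1 = lin_coeff (n - 1) (lhs_coeff j n)"
    using lin_coeff_last_lhs_coeff[OF j n] ..
  also have "\<dots> = (2 * of_nat j - 1) * (\<Sum>l\<le>n. lin_coeff (n - 1) (lhs_v_coeff n l) * (of_nat j * (of_nat j - 1)) ^ l)"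
    unfolding lhs_coeff_eq_v_expansion[OF j n] lin_coeff_def
    by (simp add: lookup_mconst_mult lookup_sum lookup_mult_mconst_power)
  finally show ?thesis
    using j by simp
qed

text \<open>By the weight bound, the only monomial of \<open>p\<close> that involves a variable \<open>a\<^sub>k\<close> with
  \<open>k \<ge> n - 1\<close> is \<open>a\<^sub>n\<^sub>-\<^sub>1\<close> itself.\<close>

lemma vars_in_drop_last_var:
  assumes "weight_le (n + 1) p" "1 \<le> n"
  shows "vars_in (p - mconst (lin_coeff (n - 1) p) * mvar (n - 1)) {..<n - 1}"
  unfolding vars_in_def
proof
  let ?e = "Poly_Mapping.single (n - 1) (1::nat)"
  fix m assume "m \<in> Poly_Mapping.keys (p - mconst (lin_coeff (n - 1) p) * mvar (n - 1))"
  then have "Poly_Mapping.lookup p m - lin_coeff (n - 1) p * (if m = ?e then 1 else 0) \<noteq> 0"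
    by (simp add: in_keys_iff lookup_minus lookup_mconst_mult lookup_mvar)
  then have "m \<noteq> ?e" and "m \<in> Poly_Mapping.keys p"
    by (auto simp: lin_coeff_def in_keys_iff split: if_splits)
  then have "weight m \<le> n + 1" using assms(1) by (simp add: weight_le_def)
  show "Poly_Mapping.keys m \<subseteq> {..<n - 1}"
  proof
    fix k assume "k \<in> Poly_Mapping.keys m"
    then show "k \<in> {..<n - 1}"
      using weight_le_imp_single[OF \<open>weight m \<le> n + 1\<close> _ _ assms(2)] \<open>m \<noteq> ?e\<close> by force
  qed
qed

lemma S_prop_exists:
  assumes n: "1 \<le> n"
  shows "\<exists>T. S_prop n T"
proof -
  define T where
    "T l = (if l \<le> n then lhs_v_coeff n l - mconst (lin_coeff (n - 1) (lhs_v_coeff n l)) * mvar (n - 1) else 0)" for l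
  have "lhs_coeff j n = of_nat (2 * j - 1) * (mvar (n - 1) + T 0 + (\<Sum>i = 1..n. T i * of_nat (j * (j - 1)) ^ i))"
    if j: "1 \<le> j" for j
  proof -
    let ?w = "of_nat j * (of_nat j - 1) :: rat"
    have "(\<Sum>l\<le>n. lhs_v_coeff n l * mconst ?w ^ l) =
        (\<Sum>l\<le>n. T l * mconst ?w ^ l + mvar (n - 1) * mconst (lin_coeff (n - 1) (lhs_v_coeff n l) * ?w ^ l))"
      by (intro sum.cong refl) (simp add: T_def algebra_simps mconst_mult mconst_power)
    also have "\<dots> = (\<Sum>l\<le>n. T l * mconst ?w ^ l) + mvar (n - 1)"
      using lhs_v_coeff_last_var_sum[OF j n]
      by (simp add: sum.distrib sum_distrib_left[symmetric] mconst_sum[symmetric])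
    also have "(\<Sum>l\<le>n. T l * mconst ?w ^ l) = T 0 + (\<Sum>l = 1..n. T l * mconst ?w ^ l)"
      by (simp add: atMost_atLeast0 sum.atLeast_Suc_atMost)
    finally have "(\<Sum>l\<le>n. lhs_v_coeff n l * mconst ?w ^ l) = T 0 + (\<Sum>l = 1..n. T l * mconst ?w ^ l) + mvar (n - 1)" .
    moreover have "of_nat (2 * j - 1) = mconst (2 * of_nat j - 1)" and "of_nat (j * (j - 1)) = mconst ?w"
      using j by (simp_all add: mconst_of_nat[symmetric] of_nat_diff)
    ultimately show ?thesis
      unfolding lhs_coeff_eq_v_expansion[OF j n] by (simp add: algebra_simps)
  qed
  moreover have "vars_in (T i) {..<n - 1}" if "i \<le> n" for i
    using vars_in_drop_last_var[OF weight_le_lhs_v_coeff[OF n] n] that by (simp add: T_def)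
  ultimately have "S_prop n T"
    unfolding S_prop_def by (auto simp: T_def)
  then show ?thesis by blast
qed

lemma coeffs_eq_0_if_infinitely_many_roots:
  fixes c :: "nat \<Rightarrow> 'a::idom"
  assumes "infinite A" "\<And>x. x \<in> A \<Longrightarrow> (\<Sum>i\<le>n. c i * x ^ i) = 0" "i \<le> n"
  shows "c i = 0"
proof -
  define R where "R = (\<Sum>i\<le>n. monom (c i) i)"
  have "poly R x = (\<Sum>i\<le>n. c i * x ^ i)" for x
    by (simp add: R_def poly_sum poly_monom)
  then have "{x. poly R x = 0} \<supseteq> A" using assms(2) by auto
  then have "R = 0" using assms(1) poly_roots_finite finite_subset by blast
  moreover have "coeff R i = c i"
    using assms(3) by (simp add: R_def coeff_sum coeff_monom)
  ultimately show ?thesis by simp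
qed

lemma infinite_range_pronic: "infinite (range (\<lambda>k::nat. of_nat ((k + 1) * k) :: 'a::semiring_char_0))"
proof -
  have "inj (\<lambda>k::nat. (k + 1) * k)"
    by (rule strict_mono_imp_inj_on) (simp add: strict_mono_Suc_iff)
  then have "inj (\<lambda>k::nat. of_nat ((k + 1) * k) :: 'a)"
    using inj_compose[OF inj_of_nat] unfolding o_def by blast
  then show ?thesis by (rule range_inj_infinite)
qed

lemma S_prop_lookup_diff_root:
  assumes T1: "S_prop n T1" and T2: "S_prop n T2" and j: "1 \<le> j"
  shows "(\<Sum>i\<le>n. (Poly_Mapping.lookup (T1 i) m - Poly_Mapping.lookup (T2 i) m) * of_nat (j * (j - 1)) ^ i) = 0"
proof -
  have "2 * j - 1 \<noteq> 0" using j by simp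
  then have "of_nat (2 * j - 1) \<noteq> (0 :: mpoly)" by (simp only: of_nat_eq_0_iff not_False_eq_True)
  then have "T1 0 + (\<Sum>i = 1..n. T1 i * of_nat (j * (j - 1)) ^ i) = T2 0 + (\<Sum>i = 1..n. T2 i * of_nat (j * (j - 1)) ^ i)"
    using T1 T2 j unfolding S_prop_def by auto
  then have "(\<Sum>i\<le>n. Poly_Mapping.lookup (T1 i * of_nat (j * (j - 1)) ^ i) m) =
      (\<Sum>i\<le>n. Poly_Mapping.lookup (T2 i * of_nat (j * (j - 1)) ^ i) m)"
    by (simp add: atMost_atLeast0 sum.atLeast_Suc_atMost lookup_add lookup_sum[symmetric] del: of_nat_mult)
  then show ?thesis
    by (simp add: mconst_of_nat[symmetric] lookup_mult_mconst_power sum_subtractf left_diff_distrib del: of_nat_mult)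
qed

lemma S_prop_unique:
  assumes T1: "S_prop n T1" and T2: "S_prop n T2"
  shows "T1 = T2"
proof
  fix i
  show "T1 i = T2 i"
  proof (cases "i \<le> n")
    case False then show ?thesis using T1 T2 by (simp add: S_prop_def)
  next
    case True
    show ?thesis
    proof (rule poly_mapping_eqI)
      fix m
      have "(\<Sum>i\<le>n. (Poly_Mapping.lookup (T1 i) m - Poly_Mapping.lookup (T2 i) m) * x ^ i) = 0"
        if x: "x \<in> range (\<lambda>k::nat. of_nat ((k + 1) * k))" for x
      proof -
        obtain k where "x = of_nat ((k + 1) * k)" using x by blast
        then show ?thesis using S_prop_lookup_diff_root[OF T1 T2, of "k + 1"] by simp
      qed
      then have "Poly_Mapping.lookup (T1 i) m - Poly_Mapping.lookup (T2 i) m = 0"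
        by (rule coeffs_eq_0_if_infinitely_many_roots[OF infinite_range_pronic _ True])
      then show "Poly_Mapping.lookup (T1 i) m = Poly_Mapping.lookup (T2 i) m" by simp
    qed
  qed
qed

lemma S_prop_S:
  assumes "1 \<le> n" shows "S_prop n (S n)"
  unfolding S_def using S_prop_exists[OF assms] S_prop_unique by (metis theI)

section \<open>The linear part of Chat\<close>

lemma lhs_coeff_eq_S:
  "1 \<le> n \<Longrightarrow> 1 \<le> j \<Longrightarrow>
    lhs_coeff j n = of_nat (2 * j - 1) * (mvar (n - 1) + S n 0 + (\<Sum>i = 1..n. S n i * of_nat (j * (j - 1)) ^ i))"
  using S_prop_S unfolding S_prop_def by blast

lemma order_ge2_S0:
  assumes n: "1 \<le> n"
  shows "order_ge2 (S n 0)"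
proof -
  have "(\<Sum>i = 1..n. S n i * of_nat (1 * (1 - 1)) ^ i) = 0"
    by (intro sum.neutral) auto
  then have "lhs_coeff 1 n = mvar (n - 1) + S n 0"
    using lhs_coeff_eq_S[OF n, of 1] by simp
  moreover have "const_coeff (lhs_coeff 1 n) = 0"
    using const_coeff_lhs_coeff[of 1 n] n poly_psi_1[of "n + 1"] by simp
  ultimately show ?thesis
    using lin_coeff_lhs_coeff_1[OF n] by (simp add: order_ge2_def)
qed

lemma sum_const_coeff_S:
  assumes n: "1 \<le> n"
  shows "(\<Sum>i = 1..n. 3 * 2 ^ i * const_coeff (S n i)) = (-1) ^ (n - 1)"
proof -
  have "const_coeff (lhs_coeff 2 n) = 3 * (\<Sum>i = 1..n. const_coeff (S n i) * 2 ^ i)"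
    using lhs_coeff_eq_S[OF n, of 2] order_ge2_S0[OF n]
    by (simp add: const_coeff_mult const_coeff_sum const_coeff_power order_ge2_def)
  moreover have "const_coeff (lhs_coeff 2 n) = (-1) ^ (n - 1)"
  proof -
    have "const_coeff (lhs_coeff 2 n) = poly (psi (n + 1)) 2 - poly (psi (Suc n)) (-1 :: rat)"
      using const_coeff_lhs_coeff[of 2 n] n by simp
    also have "\<dots> = (-1) ^ (n - 1)"
      using n by (cases n) (simp_all add: poly_psi_2 poly_psi_minus_1)
    finally show ?thesis .
  qed
  ultimately show ?thesis by (simp add: sum_distrib_left mult_ac)
qed

lemma length_Clist: "length (Clist m) = m"
  by (induction m) auto

lemma nth_Clist: "i < m \<Longrightarrow> Clist m ! i = Cstep (Clist i)"
  by (induction m) (auto simp: nth_append length_Clist less_Suc_eq)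

definition Chat_subst :: "nat \<Rightarrow> nat \<Rightarrow> mpoly" where
  "Chat_subst m k = (if k < m - 1 then Chat (Suc k) else 0)"

lemma Chat_eq:
  assumes "1 \<le> m"
  shows "Chat m = - msubst (Chat_subst m) (S m 0) + (\<Sum>i = 1..m. 3 * 2 ^ i * msubst (Chat_subst m) (S m i) * P i)"
proof -
  have "(\<lambda>k. if k < length (Clist (m - 1)) then Clist (m - 1) ! k else 0) = Chat_subst m"
    by (auto simp: Chat_subst_def Chat_def length_Clist nth_Clist fun_eq_iff simp del: Clist.simps)
  moreover have "Suc (length (Clist (m - 1))) = m" using assms by (simp add: length_Clist)
  moreover have "Chat m = Cstep (Clist (m - 1))" using assms by (simp add: Chat_def nth_Clist)
  ultimately show ?thesis unfolding Cstep_def Let_def by simp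
qed

lemma const_coeff_Chat: "1 \<le> m \<Longrightarrow> const_coeff (Chat m) = 0"
proof (induction m rule: less_induct)
  case (less m)
  have "const_coeff (Chat_subst m k) = 0" for k
    using less by (simp add: Chat_subst_def)
  then show ?case
    unfolding Chat_eq[OF less.prems] using order_ge2_S0[OF less.prems]
    by (simp add: const_coeff_sum const_coeff_mult const_coeff_msubst const_coeff_P order_ge2_def)
qed

lemma lin_coeff_Chat:
  assumes m: "1 \<le> m"
  shows "lin_coeff k (Chat m) = (\<Sum>i = 1..m. 3 * 2 ^ i * const_coeff (S m i) * (if k = i - 1 then 1 else 0))"
proof -
  have subst0: "const_coeff (Chat_subst m k) = 0" for k
    by (simp add: Chat_subst_def const_coeff_Chat)
  have "lin_coeff k (msubst (Chat_subst m) (S m 0)) = 0"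
    using order_ge2_msubst[OF subst0 order_ge2_S0[OF m]] by (simp add: order_ge2_def)
  moreover have "lin_coeff k (3 * 2 ^ i * msubst (Chat_subst m) (S m i) * P i) =
      3 * 2 ^ i * const_coeff (S m i) * (if k = i - 1 then 1 else 0)" if "i \<in> {1..m}" for i
    using that lin_coeff_P[of k "i - 1"]
    by (simp add: lin_coeff_mult const_coeff_mult const_coeff_power const_coeff_P const_coeff_msubst[OF subst0])
  ultimately show ?thesis
    unfolding Chat_eq[OF m] lin_coeff_add lin_coeff_uminus lin_coeff_sum by simp
qed

theorem proposition4p5:
  fixes n :: nat
  assumes "n \<ge> 1"
  shows "(\<Sum>k<n. mcoeff (Chat n) (Poly_Mapping.single k 1)) = (-1) ^ (n - 1)"
proof -
  have "(\<Sum>k<n. mcoeff (Chat n) (Poly_Mapping.single k 1)) =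
      (\<Sum>i = 1..n. \<Sum>k<n. 3 * 2 ^ i * const_coeff (S n i) * (if k = i - 1 then 1 else 0))"
    unfolding mcoeff_def lin_coeff_def[symmetric] lin_coeff_Chat[OF assms] by (rule sum.swap)
  also have "\<dots> = (\<Sum>i = 1..n. 3 * 2 ^ i * const_coeff (S n i))"
    by (intro sum.cong refl) (auto simp: if_distrib[where f = "\<lambda>x. _ * x"] cong: if_cong)
  also have "\<dots> = (-1) ^ (n - 1)"
    by (rule sum_const_coeff_S[OF assms])
  finally show ?thesis .
qed

end
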